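(* Fix $g\in\{0,1\}$ and a maximal lag $p\in\mathbb{N}$. Suppose that there exists at least one lag $h\in\{0,\dots,p\}$ with $\|\mathcal{R}_h\|_{\mathcal{S}}>0$, and that $E\|X_k^{(g')}\|^4<\infty$ for $g'=0,1$. Let $Y_1,\dots,Y_{p+1}$ be consecutive functions from group $\Pi_g$, and classify them with the oracle classifier (built from the true operators $\kappa^{(h)}_{g'}$ and the true discriminative feature functions $\nu_{h,j}$, with fixed dimensions $d_h$ and weights $W(h)>0$). Then the misclassification probability satisfies $$P\big(\Pi_{1-g}\,\big|\,\Pi_g,\{\nu_{h,j}\colon h\ge0,j\ge1\}\big)\le \frac{4\sum_{h=0}^p\Big(W(h)\sum_{i,j=1}^{d_h}\sigma^h_{ij}\Big)}{\sum_{h=0}^p\Big(W(h)\sum_{j=1}^{d_h}\lambda_{hj}\Big)}\wedge 1 .$$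
   Context: Work in $L^2[0,1]$ with inner product $\langle x,y\rangle=\int_0^1x(t)y(t)\,dt$ and norm $\|x\|=\langle x,x\rangle^{1/2}$. For an operator $\Phi$ on $L^2[0,1]$, the Hilbert–Schmidt norm is $\|\Phi\|_{\mathcal{S}}^2=\sum_{i,j}\langle\Phi(e_i),e_j\rangle^2$ for any orthonormal basis $(e_i)$. For each group $g\in\{0,1\}$, $\{X_k^{(g)}\colon k\ge1\}$ is a weakly stationary sequence of random functions in $L^2[0,1]$ with mean function zero. For $h\in\mathbb{N}$ the lag-$h$ (auto-)covariance operators are $C_g^{(h)}(\cdot)=E\{X_k^{(g)}\langle X_{k+h}^{(g)},\cdot\rangle\}$ and $C_g^{(-h)}(\cdot)=E\{X_{k+h}^{(g)}\langle X_k^{(g)},\cdot\rangle\}$, and $\kappa_g^{(h)}=C_g^{(h)}+C_g^{(-h)}$. Let $\mathcal{R}_h=(\kappa_0^{(h)}-\kappa_1^{(h)})^2$, with spectral decomposition $\mathcal{R}_h(\cdot)=\sum_{j\ge1}\lambda_{hj}\langle\nu_{h,j},\cdot\rangle\nu_{h,j}$, $\lambda_{h1}>\lambda_{h2}>\cdots\ge 0$, $\{\nu_{h,j}\}_j$ orthonormal (the discriminative feature functions of lag $h$). A set of consecutive functions $Y_1,\dots,Y_{p+1}$ "from group $\Pi_g$" means they are consecutive elements of a process with the same law as $\{X_k^{(g)}\}$. For $0\le h\le p$ define $$\hat\kappa_{y,h}(\cdot)=\frac{1}{p+1-h}\sum_{k=1}^{p+1-h}\Big(Y_k\langle Y_{k+h},\cdot\rangle+Y_{k+h}\langle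 Y_k,\cdot\rangle\Big),$$ $y^h_{ij}=\langle\hat\kappa_{y,h}(\nu_{h,i}),\nu_{h,j}\rangle$, and $\sigma^h_{ij}=E\{y^h_{ij}-\langle\kappa_g^{(h)}(\nu_{h,i}),\nu_{h,j}\rangle\}^2$ (expectation when the $Y_k$ come from group $g$). The oracle classifier computes, for $g'=0,1$, $D_{g'}=\sum_{h=0}^pW(h)\sum_{i,j=1}^{d_h}\big(\langle\kappa^{(h)}_{g'}(\nu_{h,i}),\nu_{h,j}\rangle-y^h_{ij}\big)^2$ and assigns $Y_1,\dots,Y_{p+1}$ to $\Pi_0$ if $D_0-D_1<0$ and to $\Pi_1$ otherwise. $P(\Pi_{1-g}\mid\Pi_g,\cdot)$ denotes the probability that functions from group $\Pi_g$ are assigned to $\Pi_{1-g}$. $a\wedge b=\min(a,b)$. *)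

theory Defs
  imports "HOL-Probability.Probability"
begin

text \<open>The ambient space L2[0,1] is modelled by an abstract separable real Hilbert space
  (a type of class real_inner, banach, second_countable_topology).
  Random functions are measurable maps from a probability space into it;
  expectations of Hilbert-valued quantities are Bochner integrals.\<close>

text \<open>Lag-h covariance operators (computed at k = 1; by weak stationarity they do not depend on k).\<close>
definition cov_op :: "'w measure \<Rightarrow> (nat \<Rightarrow> 'w \<Rightarrow> 'a::{real_inner,banach,second_countable_topology})
    \<Rightarrow> nat \<Rightarrow> 'a \<Rightarrow> 'a" where
  "cov_op M X h v = (LINT \<omega>|M. inner (X (1 + h) \<omega>) v *\<^sub>R X 1 \<omega>)"

definition cov_op_neg :: "'w measure \<Rightarrow> (nat \<Rightarrow> 'w \<Rightarrow> 'a::{real_inner,banach,second_countable_topology})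
    \<Rightarrow> nat \<Rightarrow> 'a \<Rightarrow> 'a" where
  "cov_op_neg M X h v = (LINT \<omega>|M. inner (X 1 \<omega>) v *\<^sub>R X (1 + h) \<omega>)"

definition kappa :: "'w measure \<Rightarrow> (nat \<Rightarrow> 'w \<Rightarrow> 'a::{real_inner,banach,second_countable_topology})
    \<Rightarrow> nat \<Rightarrow> 'a \<Rightarrow> 'a" where
  "kappa M X h v = cov_op M X h v + cov_op_neg M X h v"

definition weakly_stationary :: "'w measure \<Rightarrow> (nat \<Rightarrow> 'w \<Rightarrow> 'a::{real_inner,banach,second_countable_topology}) \<Rightarrow> bool" where
  "weakly_stationary M X \<longleftrightarrow>
     (\<forall>k\<ge>1. X k \<in> borel_measurable M) \<and>
     (\<forall>k\<ge>1. integrable M (\<lambda>\<omega>. (norm (X k \<omega>))\<^sup>2)) \<and>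
     (\<forall>k\<ge>1. (LINT \<omega>|M. X k \<omega>) = (LINT \<omega>|M. X 1 \<omega>)) \<and>
     (\<forall>k\<ge>1. \<forall>h v. (LINT \<omega>|M. inner (X (k + h) \<omega>) v *\<^sub>R X k \<omega>) = cov_op M X h v \<and>
                   (LINT \<omega>|M. inner (X k \<omega>) v *\<^sub>R X (k + h) \<omega>) = cov_op_neg M X h v)"

definition zero_mean :: "'w measure \<Rightarrow> (nat \<Rightarrow> 'w \<Rightarrow> 'a::{real_inner,banach,second_countable_topology}) \<Rightarrow> bool" where
  "zero_mean M X \<longleftrightarrow> (\<forall>k\<ge>1. integrable M (X k) \<and> (LINT \<omega>|M. X k \<omega>) = 0)"

definition R_op :: "(nat \<Rightarrow> 'w measure) \<Rightarrow> (nat \<Rightarrow> nat \<Rightarrow> 'w \<Rightarrow> 'a::{real_inner,banach,second_countable_topology})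
    \<Rightarrow> nat \<Rightarrow> 'a \<Rightarrow> 'a" where
  "R_op Mg X h = (let D = (\<lambda>v. kappa (Mg 0) (X 0) h v - kappa (Mg 1) (X 1) h v) in D \<circ> D)"

definition is_onb :: "'a::real_inner set \<Rightarrow> bool" where
  "is_onb B \<longleftrightarrow> (\<forall>e\<in>B. norm e = 1) \<and> (\<forall>e\<in>B. \<forall>f\<in>B. e \<noteq> f \<longrightarrow> inner e f = 0)
               \<and> closure (span B) = UNIV"

definition hs_norm :: "('a::real_inner \<Rightarrow> 'a) \<Rightarrow> real" where
  "hs_norm \<Phi> = (let B = (SOME B. is_onb B) in
     sqrt (infsum (\<lambda>(e, f). (inner (\<Phi> e) f)\<^sup>2) (B \<times> B)))"

definition spectral_decomp :: "('a::real_inner \<Rightarrow> 'a) \<Rightarrow> (nat \<Rightarrow> 'a) \<Rightarrow> (nat \<Rightarrow> real) \<Rightarrow> bool" where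
  "spectral_decomp T nu l \<longleftrightarrow>
     (\<forall>i\<ge>1. \<forall>j\<ge>1. inner (nu i) (nu j) = (if i = j then 1 else 0)) \<and>
     (\<forall>j\<ge>1. 0 \<le> l j \<and> l (Suc j) \<le> l j \<and> (0 < l (Suc j) \<longrightarrow> l (Suc j) < l j)) \<and>
     (\<forall>v. (\<lambda>n. (l (Suc n) * inner (nu (Suc n)) v) *\<^sub>R nu (Suc n)) sums T v)"

definition kappa_hat :: "nat \<Rightarrow> (nat \<Rightarrow> 'a::real_inner) \<Rightarrow> nat \<Rightarrow> 'a \<Rightarrow> 'a" where
  "kappa_hat p y h v = (1 / real (p + 1 - h)) *\<^sub>R
     (\<Sum>k = 1..p + 1 - h. inner (y (k + h)) v *\<^sub>R y k + inner (y k) v *\<^sub>R y (k + h))"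

definition yfeat :: "nat \<Rightarrow> (nat \<Rightarrow> nat \<Rightarrow> 'a::real_inner) \<Rightarrow> (nat \<Rightarrow> 'a) \<Rightarrow> nat \<Rightarrow> nat \<Rightarrow> nat \<Rightarrow> real" where
  "yfeat p \<nu> y h i j = inner (kappa_hat p y h (\<nu> h i)) (\<nu> h j)"

definition Dstat :: "(nat \<Rightarrow> 'w measure) \<Rightarrow> (nat \<Rightarrow> nat \<Rightarrow> 'w \<Rightarrow> 'a::{real_inner,banach,second_countable_topology})
    \<Rightarrow> (nat \<Rightarrow> real) \<Rightarrow> (nat \<Rightarrow> nat) \<Rightarrow> (nat \<Rightarrow> nat \<Rightarrow> 'a) \<Rightarrow> nat \<Rightarrow> (nat \<Rightarrow> 'a) \<Rightarrow> nat \<Rightarrow> real" where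
  "Dstat Mg X W d \<nu> p y g' = (\<Sum>h = 0..p. W h * (\<Sum>i = 1..d h. \<Sum>j = 1..d h.
      (inner (kappa (Mg g') (X g') h (\<nu> h i)) (\<nu> h j) - yfeat p \<nu> y h i j)\<^sup>2))"

definition oracle_class :: "(nat \<Rightarrow> 'w measure) \<Rightarrow> (nat \<Rightarrow> nat \<Rightarrow> 'w \<Rightarrow> 'a::{real_inner,banach,second_countable_topology})
    \<Rightarrow> (nat \<Rightarrow> real) \<Rightarrow> (nat \<Rightarrow> nat) \<Rightarrow> (nat \<Rightarrow> nat \<Rightarrow> 'a) \<Rightarrow> nat \<Rightarrow> (nat \<Rightarrow> 'a) \<Rightarrow> nat" where
  "oracle_class Mg X W d \<nu> p y =
     (if Dstat Mg X W d \<nu> p y 0 - Dstat Mg X W d \<nu> p y 1 < 0 then 0 else 1)"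

text \<open>sigma^h_{ij} = E (y^h_{ij} - <kappa_g^(h) nu_{h,i}, nu_{h,j}>)^2, for the sample Y_k = Z_{m+k}.\<close>
definition sigma :: "'v measure \<Rightarrow> (nat \<Rightarrow> 'v \<Rightarrow> 'a) \<Rightarrow> nat \<Rightarrow>
    (nat \<Rightarrow> 'w measure) \<Rightarrow> (nat \<Rightarrow> nat \<Rightarrow> 'w \<Rightarrow> 'a::{real_inner,banach,second_countable_topology})
    \<Rightarrow> nat \<Rightarrow> nat \<Rightarrow> (nat \<Rightarrow> nat \<Rightarrow> 'a) \<Rightarrow> nat \<Rightarrow> nat \<Rightarrow> nat \<Rightarrow> real" where
  "sigma M Z m Mg X g p \<nu> h i j = (LINT \<omega>|M.
     (yfeat p \<nu> (\<lambda>k. Z (m + k) \<omega>) h i j - inner (kappa (Mg g) (X g) h (\<nu> h i)) (\<nu> h j))\<^sup>2)"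

end

theory Submission
  imports Defs
begin

text \<open>Write \<open>a\<^sub>g\<close> for the feature coefficients of \<open>\<kappa>\<^sub>g\<close>, \<open>y\<close> for those of the sample and
  \<open>S = \<Sum> W (y - a\<^sub>g)\<^sup>2\<close>. If the sample is misclassified, then \<open>D\<^sub>1\<^sub>-\<^sub>g \<le> D\<^sub>g = S\<close>, and the
  inequality \<open>(u + v)\<^sup>2 \<le> 2u\<^sup>2 + 2v\<^sup>2\<close> gives \<open>\<Sum> W (a\<^sub>1\<^sub>-\<^sub>g - a\<^sub>g)\<^sup>2 \<le> 2 D\<^sub>1\<^sub>-\<^sub>g + 2 S \<le> 4 S\<close>.
  Since \<open>\<R>\<^sub>h = (\<kappa>\<^sub>0 - \<kappa>\<^sub>1)\<^sup>2\<close> with \<open>\<kappa>\<^sub>0 - \<kappa>\<^sub>1\<close> self-adjoint, every eigenvector \<open>\<nu>\<close> of a positive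
  (hence simple) eigenvalue \<open>\<lambda>\<close> of \<open>\<R>\<^sub>h\<close> is an eigenvector of \<open>\<kappa>\<^sub>0 - \<kappa>\<^sub>1\<close>, so
  \<open>\<lambda> = \<langle>(\<kappa>\<^sub>0 - \<kappa>\<^sub>1) \<nu>, \<nu>\<rangle>\<^sup>2\<close>; hence \<open>\<Sum> W (a\<^sub>0 - a\<^sub>1)\<^sup>2\<close> dominates \<open>\<Lambda> = \<Sum> W \<lambda>\<close>, which is positive
  because some \<open>\<R>\<^sub>h\<close> is nonzero. Misclassification therefore forces \<open>S \<ge> \<Lambda>/4\<close>, and Markov's
  inequality bounds its probability by \<open>4 E S / \<Lambda>\<close>, where \<open>E S = \<Sum> W \<sigma>\<close> is finite by the fourth moments,
  which the sample inherits from its group through the equality of laws.\<close>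

text \<open>\<open>distr K N G\<close> is the zero measure unless \<open>G\<close> is measurable, so a nonzero total mass
  yields the usual formula without knowing that \<open>G\<close> is measurable. This is needed because only
  \<open>X k\<close> with \<open>k \<ge> 1\<close> are assumed measurable, hence the joint map \<open>\<lambda>\<omega> k. X k \<omega>\<close> need not be.\<close>

lemma emeasure_distr_if_nonzero:
  assumes "emeasure (distr K N G) (space N) \<noteq> 0" and "A \<in> sets N"
  shows "emeasure (distr K N G) A = emeasure K (G -` A \<inter> space K)"
proof -
  let ?\<mu> = "\<lambda>A. emeasure K (G -` A \<inter> space K)"
  have sigma_eq: "sigma_sets (space N) (sets N) = sets N"
    by (simp add: sigma_algebra.sigma_sets_eq sets.sigma_algebra_axioms)
  have "measure_space (space N) (sets N) ?\<mu>"
    using assms(1) unfolding distr_def emeasure_measure_of_conv sigma_eq by (auto split: if_splits)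
  then show ?thesis
    unfolding distr_def emeasure_measure_of_conv sigma_eq using assms(2) by simp
qed

lemma distr_component_eq:
  fixes Z :: "nat \<Rightarrow> 'v \<Rightarrow> 'a::{real_normed_vector,second_countable_topology}"
  assumes "prob_space M" and Z: "\<And>k. Z k \<in> borel_measurable M"
    and law: "distr M (PiM UNIV (\<lambda>_. borel)) (\<lambda>\<omega> k. Z k \<omega>)
            = distr K (PiM UNIV (\<lambda>_. borel)) (\<lambda>\<omega> k. X k \<omega>)"
    and Xk: "X k \<in> borel_measurable K"
  shows "distr M borel (Z k) = distr K borel (X k)"
proof (rule measure_eqI)
  let ?N = "PiM UNIV (\<lambda>_. borel) :: (nat \<Rightarrow> 'a) measure"
  have Z_joint: "(\<lambda>\<omega> k. Z k \<omega>) \<in> measurable M ?N"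
    by (rule measurable_PiM_single') (auto simp: Z)
  have "emeasure (distr K ?N (\<lambda>\<omega> k. X k \<omega>)) (space ?N) = 1"
    using prob_space.emeasure_space_1[OF prob_space.prob_space_distr[OF assms(1) Z_joint]]
    by (simp add: law)
  then have X_nonzero: "emeasure (distr K ?N (\<lambda>\<omega> k. X k \<omega>)) (space ?N) \<noteq> 0"
    by simp
  fix B :: "'a set"
  assume "B \<in> sets (distr M borel (Z k))"
  then have B: "B \<in> sets borel" by simp
  let ?A = "(\<lambda>x. x k) -` B \<inter> space ?N"
  have A: "?A \<in> sets ?N"
    using B by (auto intro: measurable_sets measurable_component_singleton)
  have "emeasure (distr M borel (Z k)) B = emeasure M (Z k -` B \<inter> space M)"
    using B Z by (simp add: emeasure_distr)
  also have "\<dots> = emeasure (distr M ?N (\<lambda>\<omega> k. Z k \<omega>)) ?A"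
    using emeasure_distr[OF Z_joint A] by (simp add: space_PiM vimage_def)
  also have "\<dots> = emeasure K ((\<lambda>\<omega> k. X k \<omega>) -` ?A \<inter> space K)"
    unfolding law by (rule emeasure_distr_if_nonzero[OF X_nonzero A])
  also have "\<dots> = emeasure (distr K borel (X k)) B"
    using B Xk by (simp add: emeasure_distr space_PiM vimage_def)
  finally show "emeasure (distr M borel (Z k)) B = emeasure (distr K borel (X k)) B" .
qed simp

lemma (in finite_measure) integral_Markov_inequality_subset:
  assumes "integrable M f" "AE x in M. 0 \<le> f x" "0 < c" "A \<subseteq> {x \<in> space M. c \<le> f x}"
  shows "measure M A \<le> (\<integral>x. f x \<partial>M) / c"
proof -
  have "measure M A \<le> measure M {x \<in> space M. c \<le> f x}"
    using assms(4) borel_measurable_integrable[OF assms(1)]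
    by (intro finite_measure_mono) measurable
  also have "\<dots> \<le> (\<integral>x. f x \<partial>M) / c"
    by (rule integral_Markov_inequality_measure[OF assms(1) sets.top assms(2,3)])
  finally show ?thesis .
qed

lemma integrable_component_distr_eq:
  fixes Z :: "nat \<Rightarrow> 'v \<Rightarrow> 'a::{real_normed_vector,second_countable_topology}"
    and f :: "'a \<Rightarrow> 'b::{banach,second_countable_topology}"
  assumes "prob_space M" and Z: "\<And>k. Z k \<in> borel_measurable M"
    and law: "distr M (PiM UNIV (\<lambda>_. borel)) (\<lambda>\<omega> k. Z k \<omega>)
            = distr K (PiM UNIV (\<lambda>_. borel)) (\<lambda>\<omega> k. X k \<omega>)"
    and Xk: "X k \<in> borel_measurable K" and f: "f \<in> borel_measurable borel"
  shows "integrable M (\<lambda>\<omega>. f (Z k \<omega>)) \<longleftrightarrow> integrable K (\<lambda>\<omega>. f (X k \<omega>))"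
  using integrable_distr_eq[OF Z[of k] f] integrable_distr_eq[OF Xk f]
    distr_component_eq[OF assms(1) Z law Xk]
  by simp

section \<open>Spectral decompositions\<close>

context
  fixes T :: "'a::real_inner \<Rightarrow> 'a" and nu :: "nat \<Rightarrow> 'a" and l :: "nat \<Rightarrow> real"
  assumes sd: "spectral_decomp T nu l"
begin

lemma spectral_decomp_orthonormal:
  "1 \<le> i \<Longrightarrow> 1 \<le> j \<Longrightarrow> inner (nu i) (nu j) = (if i = j then 1 else 0)"
  using sd unfolding spectral_decomp_def by auto

lemma spectral_decomp_sums:
  "(\<lambda>n. (l (Suc n) * inner (nu (Suc n)) v) *\<^sub>R nu (Suc n)) sums T v"
  using sd unfolding spectral_decomp_def by auto

lemma spectral_decomp_eigenvalue_nonneg: "1 \<le> j \<Longrightarrow> 0 \<le> l j"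
  using sd unfolding spectral_decomp_def by auto

lemma spectral_decomp_eigenvalue_less:
  assumes "1 \<le> i" "i < k" "0 < l k"
  shows "l k < l i"
proof -
  have "Suc i \<le> k" using assms(2) by simp
  then show ?thesis using assms(3)
  proof (induction k rule: dec_induct)
    case base
    then show ?case using sd \<open>1 \<le> i\<close> unfolding spectral_decomp_def by auto
  next
    case (step k)
    have "l (Suc k) < l k"
      using sd step.prems step.hyps \<open>1 \<le> i\<close> unfolding spectral_decomp_def by auto
    with step.prems step.IH show ?case by linarith
  qed
qed

lemma spectral_decomp_eigenvalue_simple:
  assumes "1 \<le> i" "1 \<le> k" "k \<noteq> i" "0 < l i"
  shows "l k \<noteq> l i"
proof (cases "k < i")
  case True
  then show ?thesis using spectral_decomp_eigenvalue_less[OF assms(2) True assms(4)] by simp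
next
  case False
  then have "i < k" using assms(3) by simp
  then show ?thesis using spectral_decomp_eigenvalue_less[OF assms(1)] assms(4) by force
qed

lemma spectral_decomp_inner:
  assumes "1 \<le> k"
  shows "inner (T w) (nu k) = l k * inner (nu k) w"
proof -
  have "(\<lambda>n. inner ((l (Suc n) * inner (nu (Suc n)) w) *\<^sub>R nu (Suc n)) (nu k))
      sums inner (T w) (nu k)"
    by (rule bounded_linear.sums[OF bounded_linear_inner_left spectral_decomp_sums])
  moreover have "(\<lambda>n. inner ((l (Suc n) * inner (nu (Suc n)) w) *\<^sub>R nu (Suc n)) (nu k))
      = (\<lambda>n. if n = k - 1 then l k * inner (nu k) w else 0)"
    by (rule ext, case_tac "Suc n = k") (use assms in \<open>auto simp: spectral_decomp_orthonormal\<close>)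
  moreover have "(\<lambda>n. if n = k - 1 then l k * inner (nu k) w else 0) sums (l k * inner (nu k) w)"
    using sums_single[of "k - 1" "\<lambda>_. l k * inner (nu k) w"] by simp
  ultimately show ?thesis using sums_unique2 by metis
qed

lemma spectral_decomp_eigenvector:
  assumes "1 \<le> i"
  shows "T (nu i) = l i *\<^sub>R nu i"
proof -
  have "(\<lambda>n. (l (Suc n) * inner (nu (Suc n)) (nu i)) *\<^sub>R nu (Suc n))
      = (\<lambda>n. if n = i - 1 then l i *\<^sub>R nu i else 0)"
    by (rule ext, case_tac "Suc n = i") (use assms in \<open>auto simp: spectral_decomp_orthonormal\<close>)
  moreover have "(\<lambda>n. if n = i - 1 then l i *\<^sub>R nu i else 0) sums (l i *\<^sub>R nu i)"
    using sums_single[of "i - 1" "\<lambda>_. l i *\<^sub>R nu i"] by simp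
  ultimately show ?thesis using spectral_decomp_sums[of "nu i"] sums_unique2 by metis
qed

text \<open>An eigenvector of a positive eigenvalue is orthogonal to all \<open>\<nu>\<^sub>k\<close> with \<open>k \<noteq> i\<close>,
  so the expansion of \<open>T w = l\<^sub>i w\<close> collapses to the single term along \<open>\<nu>\<^sub>i\<close>.\<close>

lemma spectral_decomp_eigenspace:
  assumes "1 \<le> i" "0 < l i" and eigen: "T w = l i *\<^sub>R w"
  shows "w = inner (nu i) w *\<^sub>R nu i"
proof -
  have orth: "inner (nu k) w = 0" if "1 \<le> k" "k \<noteq> i" for k
  proof -
    have "l k * inner (nu k) w = inner (T w) (nu k)"
      using spectral_decomp_inner[OF that(1), of w] by simp
    also have "\<dots> = l i * inner (nu k) w"
      by (simp add: eigen inner_commute)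
    finally have "l k * inner (nu k) w = l i * inner (nu k) w" .
    moreover have "l k \<noteq> l i"
      using spectral_decomp_eigenvalue_simple[OF assms(1) that assms(2)] .
    ultimately show ?thesis by simp
  qed
  have "(\<lambda>n. (l (Suc n) * inner (nu (Suc n)) w) *\<^sub>R nu (Suc n))
      = (\<lambda>n. if n = i - 1 then (l i * inner (nu i) w) *\<^sub>R nu i else 0)"
    by (rule ext, case_tac "Suc n = i") (use assms(1) in \<open>auto simp: orth\<close>)
  moreover have "(\<lambda>n. if n = i - 1 then (l i * inner (nu i) w) *\<^sub>R nu i else 0)
      sums ((l i * inner (nu i) w) *\<^sub>R nu i)"
    using sums_single[of "i - 1" "\<lambda>_. (l i * inner (nu i) w) *\<^sub>R nu i"] by simp
  ultimately have "T w = (l i * inner (nu i) w) *\<^sub>R nu i"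
    using spectral_decomp_sums[of w] sums_unique2 by metis
  then have "l i *\<^sub>R w = l i *\<^sub>R (inner (nu i) w *\<^sub>R nu i)" using eigen by simp
  then have "w = inner (nu i) w *\<^sub>R nu i \<or> l i = 0" by (simp only: scaleR_cancel_left)
  then show ?thesis using assms(2) by simp
qed

lemma spectral_decomp_zero_if_first_zero:
  assumes "l 1 = 0"
  shows "T v = 0"
proof -
  have "l (Suc n) = 0" for n
  proof (induction n)
    case (Suc n)
    have "0 \<le> l (Suc (Suc n))" "l (Suc (Suc n)) \<le> l (Suc n)"
      using sd unfolding spectral_decomp_def by auto
    then show ?case using Suc.IH by linarith
  qed (simp add: assms[unfolded One_nat_def])
  then have "(\<lambda>n. 0) sums T v" using spectral_decomp_sums[of v] by simp
  from sums_unique2[OF sums_zero this] show ?thesis by simp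
qed

end

text \<open>The eigenvalues of the square of a self-adjoint operator \<open>D\<close>: \<open>w = D \<nu>\<^sub>i\<close> is an
  eigenvector of \<open>D\<^sup>2\<close>, hence a multiple of \<open>\<nu>\<^sub>i\<close>, and
  \<open>l\<^sub>i = \<langle>D\<^sup>2 \<nu>\<^sub>i, \<nu>\<^sub>i\<rangle> = \<parallel>w\<parallel>\<^sup>2 = \<langle>\<nu>\<^sub>i, w\<rangle>\<^sup>2\<close>.\<close>

lemma spectral_decomp_square_eigenvalue_le:
  fixes D :: "'a::real_inner \<Rightarrow> 'a"
  assumes self_adjoint: "\<And>u v. inner (D u) v = inner u (D v)"
    and homogeneous: "\<And>c v. D (c *\<^sub>R v) = c *\<^sub>R D v"
    and sd: "spectral_decomp (D \<circ> D) nu l" and "1 \<le> i"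
  shows "l i \<le> (inner (D (nu i)) (nu i))\<^sup>2"
proof (cases "0 < l i")
  case False
  then show ?thesis using zero_le_power2[of "inner (D (nu i)) (nu i)"] by linarith
next
  case True
  define w where "w = D (nu i)"
  have DDnu: "D w = l i *\<^sub>R nu i"
    using spectral_decomp_eigenvector[OF sd \<open>1 \<le> i\<close>] by (simp add: w_def)
  have unit: "inner (nu i) (nu i) = 1"
    using spectral_decomp_orthonormal[OF sd \<open>1 \<le> i\<close> \<open>1 \<le> i\<close>] by simp
  have "(D \<circ> D) w = l i *\<^sub>R w" using DDnu by (simp add: homogeneous w_def[symmetric])
  then have w: "w = inner (nu i) w *\<^sub>R nu i"
    using spectral_decomp_eigenspace[OF sd \<open>1 \<le> i\<close> True] by blast
  have "l i = inner w w"
    using DDnu unit by (simp add: w_def self_adjoint)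
  also have "\<dots> = (inner (nu i) w)\<^sup>2"
    by (subst (1 2) w) (simp add: unit power2_eq_square)
  finally show ?thesis by (simp add: w_def inner_commute)
qed

lemma hs_norm_zero: "(\<And>v. T v = 0) \<Longrightarrow> hs_norm T = 0"
  unfolding hs_norm_def Let_def by (auto intro!: infsum_0)

lemma eigenvalue_sum_pos:
  fixes T :: "nat \<Rightarrow> 'a::real_inner \<Rightarrow> 'a"
  assumes sd: "\<And>h. h \<le> p \<Longrightarrow> spectral_decomp (T h) (nu h) (l h)"
    and nonzero: "\<exists>h\<le>p. hs_norm (T h) > 0"
    and W: "\<And>h. h \<le> p \<Longrightarrow> 0 < W h" and d: "\<And>h. h \<le> p \<Longrightarrow> 1 \<le> d h"
  shows "0 < (\<Sum>h = 0..p. W h * (\<Sum>j = 1..d h. l h j))"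
proof -
  obtain h0 where h0: "h0 \<le> p" "hs_norm (T h0) > 0" using nonzero by blast
  have l_nonneg: "h \<le> p \<Longrightarrow> 1 \<le> j \<Longrightarrow> 0 \<le> l h j" for h j
    using spectral_decomp_eigenvalue_nonneg[OF sd] by blast
  have "l h0 1 \<noteq> 0"
  proof
    assume "l h0 1 = 0"
    then have "hs_norm (T h0) = 0"
      by (intro hs_norm_zero spectral_decomp_zero_if_first_zero[OF sd[OF h0(1)]])
    with h0(2) show False by simp
  qed
  then have "0 < l h0 1" using l_nonneg[OF h0(1), of 1] by simp
  also have "l h0 1 \<le> (\<Sum>j = 1..d h0. l h0 j)"
    using d[OF h0(1)] l_nonneg[OF h0(1)] by (intro member_le_sum) auto
  finally have "0 < W h0 * (\<Sum>j = 1..d h0. l h0 j)" using W[OF h0(1)] by simp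
  also have "\<dots> \<le> (\<Sum>h = 0..p. W h * (\<Sum>j = 1..d h. l h j))"
    using h0(1) W l_nonneg
    by (intro member_le_sum mult_nonneg_nonneg sum_nonneg) (auto simp: less_imp_le)
  finally show ?thesis .
qed

section \<open>The covariance operators\<close>

lemma integrable_inner_scaleR:
  fixes A B :: "'w \<Rightarrow> 'a::{real_inner,banach,second_countable_topology}"
  assumes [measurable]: "A \<in> borel_measurable M" "B \<in> borel_measurable M"
    and "integrable M (\<lambda>\<omega>. (norm (A \<omega>))\<^sup>2)" "integrable M (\<lambda>\<omega>. (norm (B \<omega>))\<^sup>2)"
  shows "integrable M (\<lambda>\<omega>. inner (A \<omega>) v *\<^sub>R B \<omega>)"
proof (rule Bochner_Integration.integrable_bound)
  show "integrable M (\<lambda>\<omega>. norm v * ((norm (A \<omega>))\<^sup>2 + (norm (B \<omega>))\<^sup>2))"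
    using assms(3,4) by auto
  have "norm (inner a v *\<^sub>R b) \<le> norm v * ((norm a)\<^sup>2 + (norm b)\<^sup>2)" for a b :: 'a
  proof -
    have "\<bar>inner a v\<bar> * norm b \<le> (norm a * norm v) * norm b"
      by (rule mult_right_mono[OF Cauchy_Schwarz_ineq2]) simp
    then have "norm (inner a v *\<^sub>R b) \<le> norm v * (norm a * norm b)"
      by (simp add: algebra_simps)
    also have "\<dots> \<le> norm v * ((norm a)\<^sup>2 + (norm b)\<^sup>2)"
    proof (rule mult_left_mono)
      show "norm a * norm b \<le> (norm a)\<^sup>2 + (norm b)\<^sup>2"
        using sum_squares_bound[of "norm a" "norm b", unfolded mult.assoc]
          mult_nonneg_nonneg[OF norm_ge_zero norm_ge_zero, of a b]
        by linarith
    qed simp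
    finally show ?thesis .
  qed
  then show "AE \<omega> in M. norm (inner (A \<omega>) v *\<^sub>R B \<omega>)
      \<le> norm (norm v * ((norm (A \<omega>))\<^sup>2 + (norm (B \<omega>))\<^sup>2))"
    by (intro AE_I2) (smt (verit) real_norm_def)
qed measurable

lemma kappa_self_adjoint:
  assumes "weakly_stationary M X"
  shows "inner (kappa M X h u) v = inner u (kappa M X h v)"
proof -
  have integrable: "integrable M (\<lambda>\<omega>. inner (X a \<omega>) w *\<^sub>R X b \<omega>)"
    if "1 \<le> a" "1 \<le> b" for a b w
    using assms that unfolding weakly_stationary_def by (intro integrable_inner_scaleR) auto
  have cov: "inner (cov_op M X h w) z = (LINT \<omega>|M. inner (X (1 + h) \<omega>) w * inner (X 1 \<omega>) z)"
    for w z
    unfolding cov_op_def by (subst integral_inner_left[symmetric]) (auto intro: integrable)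
  have cov_neg:
    "inner (cov_op_neg M X h w) z = (LINT \<omega>|M. inner (X 1 \<omega>) w * inner (X (1 + h) \<omega>) z)"
    for w z
    unfolding cov_op_neg_def by (subst integral_inner_left[symmetric]) (auto intro: integrable)
  have "inner (kappa M X h u) v = inner (kappa M X h v) u"
    unfolding kappa_def inner_add_left cov cov_neg by (simp add: mult.commute add.commute)
  then show ?thesis by (simp add: inner_commute)
qed

lemma kappa_scaleR: "kappa M X h (c *\<^sub>R v) = c *\<^sub>R kappa M X h v"
  unfolding kappa_def cov_op_def cov_op_neg_def
  by (simp add: scaleR_add_right flip: scaleR_scaleR)

definition kappa_coef :: "(nat \<Rightarrow> 'w measure)
    \<Rightarrow> (nat \<Rightarrow> nat \<Rightarrow> 'w \<Rightarrow> 'a::{real_inner,banach,second_countable_topology})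
    \<Rightarrow> (nat \<Rightarrow> nat \<Rightarrow> 'a) \<Rightarrow> nat \<Rightarrow> nat \<Rightarrow> nat \<Rightarrow> nat \<Rightarrow> real" where
  "kappa_coef Mg X \<nu> g h i j = inner (kappa (Mg g) (X g) h (\<nu> h i)) (\<nu> h j)"

lemma R_op_eigenvalue_le:
  assumes "\<And>g'. g' \<le> 1 \<Longrightarrow> weakly_stationary (Mg g') (X g')"
    and "spectral_decomp (R_op Mg X h) (\<nu> h) l" and "1 \<le> j"
  shows "l j \<le> (kappa_coef Mg X \<nu> 0 h j j - kappa_coef Mg X \<nu> 1 h j j)\<^sup>2"
proof -
  let ?D = "\<lambda>v. kappa (Mg 0) (X 0) h v - kappa (Mg 1) (X 1) h v"
  have "spectral_decomp (?D \<circ> ?D) (\<nu> h) l"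
    using assms(2) unfolding R_op_def Let_def .
  moreover have "inner (kappa (Mg g') (X g') h u) v = inner u (kappa (Mg g') (X g') h v)"
    if "g' \<le> 1" for g' u v
    using kappa_self_adjoint[OF assms(1)[OF that]] .
  ultimately have "l j \<le> (inner (?D (\<nu> h j)) (\<nu> h j))\<^sup>2"
    using assms(3) by (intro spectral_decomp_square_eigenvalue_le)
      (auto simp: inner_diff_left inner_diff_right kappa_scaleR scaleR_diff_right)
  then show ?thesis by (simp add: kappa_coef_def inner_diff_left)
qed

definition square_integrable :: "'a measure \<Rightarrow> ('a \<Rightarrow> real) \<Rightarrow> bool" where
  "square_integrable M f \<longleftrightarrow> f \<in> borel_measurable M \<and> integrable M (\<lambda>x. (f x)\<^sup>2)"

lemma square_integrable_add:
  assumes "square_integrable M f" "square_integrable M g"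
  shows "square_integrable M (\<lambda>x. f x + g x)"
proof -
  have [measurable]: "f \<in> borel_measurable M" "g \<in> borel_measurable M"
    using assms unfolding square_integrable_def by auto
  have "integrable M (\<lambda>x. (f x + g x)\<^sup>2)"
  proof (rule Bochner_Integration.integrable_bound)
    show "integrable M (\<lambda>x. 2 * (f x)\<^sup>2 + 2 * (g x)\<^sup>2)"
      using assms unfolding square_integrable_def by auto
    have "(a + b)\<^sup>2 \<le> 2 * a\<^sup>2 + 2 * b\<^sup>2" for a b :: real
      using sum_squares_bound[of a b] by (simp add: power2_sum)
    then show "AE x in M. norm ((f x + g x)\<^sup>2) \<le> norm (2 * (f x)\<^sup>2 + 2 * (g x)\<^sup>2)"
      by (intro AE_I2) simp
  qed measurable
  then show ?thesis unfolding square_integrable_def by simp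
qed

lemma square_integrable_cmult: "square_integrable M f \<Longrightarrow> square_integrable M (\<lambda>x. c * f x)"
  unfolding square_integrable_def by (auto simp: power_mult_distrib)

lemma square_integrable_const: "finite_measure M \<Longrightarrow> square_integrable M (\<lambda>x. c)"
  unfolding square_integrable_def by (auto simp: finite_measure.integrable_const)

lemma square_integrable_diff:
  "square_integrable M f \<Longrightarrow> square_integrable M g \<Longrightarrow> square_integrable M (\<lambda>x. f x - g x)"
  using square_integrable_add[of M f "\<lambda>x. (-1) * g x"] square_integrable_cmult[of M g "-1"] by simp

lemma square_integrable_sum:
  assumes "finite_measure M" "\<And>i. i \<in> I \<Longrightarrow> square_integrable M (f i)"
  shows "square_integrable M (\<lambda>x. \<Sum>i\<in>I. f i x)"
  using assms(2)
proof (induction I rule: infinite_finite_induct)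
  case (infinite I)
  then show ?case using square_integrable_const[OF assms(1)] by simp
next
  case empty
  then show ?case using square_integrable_const[OF assms(1)] by simp
next
  case (insert a I)
  then show ?case using square_integrable_add[of M "f a"] by simp
qed

lemma square_integrable_mult:
  assumes [measurable]: "f \<in> borel_measurable M" "g \<in> borel_measurable M"
    and "integrable M (\<lambda>x. (f x) ^ 4)" "integrable M (\<lambda>x. (g x) ^ 4)"
  shows "square_integrable M (\<lambda>x. f x * g x)"
proof -
  have "integrable M (\<lambda>x. (f x * g x)\<^sup>2)"
  proof (rule Bochner_Integration.integrable_bound)
    show "integrable M (\<lambda>x. (f x) ^ 4 + (g x) ^ 4)" using assms(3,4) by auto
    have "(a * b)\<^sup>2 \<le> a ^ 4 + b ^ 4" for a b :: real
    proof -
      have "2 * (a\<^sup>2 * b\<^sup>2) \<le> a ^ 4 + b ^ 4" "0 \<le> a\<^sup>2 * b\<^sup>2"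
        using sum_squares_bound[of "a\<^sup>2" "b\<^sup>2"] by (simp_all add: power_mult[symmetric])
      then show ?thesis unfolding power_mult_distrib by linarith
    qed
    then show "AE x in M. norm ((f x * g x)\<^sup>2) \<le> norm ((f x) ^ 4 + (g x) ^ 4)"
      by (intro AE_I2) (simp add: abs_of_nonneg add_nonneg_nonneg zero_le_even_power)
  qed measurable
  then show ?thesis unfolding square_integrable_def by simp
qed

lemma integrable_inner_power4:
  fixes Y :: "'w \<Rightarrow> 'a::{real_inner,banach,second_countable_topology}"
  assumes [measurable]: "Y \<in> borel_measurable M" and "integrable M (\<lambda>x. norm (Y x) ^ 4)"
  shows "integrable M (\<lambda>x. (inner (Y x) v) ^ 4)"
proof (rule Bochner_Integration.integrable_bound)
  show "integrable M (\<lambda>x. (norm v) ^ 4 * norm (Y x) ^ 4)" using assms(2) by auto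
  have "\<bar>inner y v\<bar> ^ 4 \<le> (norm v) ^ 4 * norm y ^ 4" for y :: 'a
    using power_mono[OF Cauchy_Schwarz_ineq2[of y v], of 4]
    by (simp add: power_mult_distrib mult.commute)
  then show "AE x in M. norm ((inner (Y x) v) ^ 4) \<le> norm ((norm v) ^ 4 * norm (Y x) ^ 4)"
    by (intro AE_I2) (simp add: power_abs)
qed measurable

lemma yfeat_eq:
  "yfeat p \<nu> y h i j = (1 / real (p + 1 - h)) *
     (\<Sum>k = 1..p + 1 - h. inner (y (k + h)) (\<nu> h i) * inner (y k) (\<nu> h j)
                        + inner (y k) (\<nu> h i) * inner (y (k + h)) (\<nu> h j))"
  unfolding yfeat_def kappa_hat_def by (simp add: inner_sum_left inner_add_left)

lemma square_integrable_yfeat: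
  fixes Z :: "nat \<Rightarrow> 'w \<Rightarrow> 'a::{real_inner,banach,second_countable_topology}"
  assumes "finite_measure M" and Z [measurable]: "\<And>k. Z k \<in> borel_measurable M"
    and Z4: "\<And>k. 1 \<le> k \<Longrightarrow> integrable M (\<lambda>x. norm (Z k x) ^ 4)"
  shows "square_integrable M (\<lambda>x. yfeat p \<nu> (\<lambda>k. Z (m + k) x) h i j)"
proof -
  have "integrable M (\<lambda>x. (inner (Z k x) v) ^ 4)" if "1 \<le> k" for k v
    using integrable_inner_power4[OF Z Z4[OF that]] .
  then have "square_integrable M (\<lambda>x. \<Sum>k = 1..p + 1 - h.
      inner (Z (m + (k + h)) x) (\<nu> h i) * inner (Z (m + k) x) (\<nu> h j)
    + inner (Z (m + k) x) (\<nu> h i) * inner (Z (m + (k + h)) x) (\<nu> h j))"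
    by (intro square_integrable_sum[OF assms(1)] square_integrable_add square_integrable_mult)
      auto
  from square_integrable_cmult[OF this, of "1 / real (p + 1 - h)"] show ?thesis
    by (simp add: yfeat_eq)
qed

definition weighted_sum ::
    "(nat \<Rightarrow> real) \<Rightarrow> (nat \<Rightarrow> nat) \<Rightarrow> nat \<Rightarrow> (nat \<Rightarrow> nat \<Rightarrow> nat \<Rightarrow> real) \<Rightarrow> real" where
  "weighted_sum W d p f = (\<Sum>h = 0..p. W h * (\<Sum>i = 1..d h. \<Sum>j = 1..d h. f h i j))"

lemma weighted_sum_mono:
  assumes "\<And>h. h \<le> p \<Longrightarrow> 0 \<le> W h" "\<And>h i j. h \<le> p \<Longrightarrow> f h i j \<le> f' h i j"
  shows "weighted_sum W d p f \<le> weighted_sum W d p f'"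
  unfolding weighted_sum_def using assms by (intro sum_mono mult_left_mono) auto

lemma weighted_sum_add:
  "weighted_sum W d p (\<lambda>h i j. f h i j + f' h i j) = weighted_sum W d p f + weighted_sum W d p f'"
  unfolding weighted_sum_def by (simp add: sum.distrib distrib_left)

lemma weighted_sum_cmult: "weighted_sum W d p (\<lambda>h i j. c * f h i j) = c * weighted_sum W d p f"
  unfolding weighted_sum_def by (simp add: sum_distrib_left algebra_simps)

lemma weighted_sum_nonneg:
  "(\<And>h. h \<le> p \<Longrightarrow> 0 \<le> W h) \<Longrightarrow> (\<And>h i j. 0 \<le> f h i j) \<Longrightarrow> 0 \<le> weighted_sum W d p f"
  unfolding weighted_sum_def by (auto intro!: sum_nonneg mult_nonneg_nonneg)

lemma integrable_weighted_sum:
  "(\<And>h i j. integrable M (f h i j)) \<Longrightarrow> integrable M (\<lambda>x. weighted_sum W d p (\<lambda>h i j. f h i j x))"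
  unfolding weighted_sum_def by auto

lemma integral_weighted_sum:
  "(\<And>h i j. integrable M (f h i j)) \<Longrightarrow>
    (LINT x|M. weighted_sum W d p (\<lambda>h i j. f h i j x))
      = weighted_sum W d p (\<lambda>h i j. LINT x|M. f h i j x)"
  unfolding weighted_sum_def by (simp add: integral_sum integrable_sum)

lemma diagonal_sum_le_weighted_sum:
  assumes "\<And>h. h \<le> p \<Longrightarrow> 0 \<le> W h" "\<And>h i j. 0 \<le> f h i j"
    and "\<And>h j. h \<le> p \<Longrightarrow> 1 \<le> j \<Longrightarrow> l h j \<le> f h j j"
  shows "(\<Sum>h = 0..p. W h * (\<Sum>j = 1..d h. l h j)) \<le> weighted_sum W d p f"
  unfolding weighted_sum_def
proof (rule sum_mono)
  fix h assume h: "h \<in> {0..p}"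
  then have "(\<Sum>j = 1..d h. l h j) \<le> (\<Sum>i = 1..d h. f h i i)"
    using assms(3) by (intro sum_mono) auto
  also have "\<dots> \<le> (\<Sum>i = 1..d h. \<Sum>j = 1..d h. f h i j)"
    using assms(2) by (intro sum_mono member_le_sum) auto
  finally show "W h * (\<Sum>j = 1..d h. l h j) \<le> W h * (\<Sum>i = 1..d h. \<Sum>j = 1..d h. f h i j)"
    using assms(1) h by (intro mult_left_mono) auto
qed

lemma weighted_sum_separation_le:
  assumes "\<And>h. h \<le> p \<Longrightarrow> 0 \<le> W h"
    and closer: "weighted_sum W d p (\<lambda>h i j. (b h i j - y h i j)\<^sup>2)
               \<le> weighted_sum W d p (\<lambda>h i j. (a h i j - y h i j)\<^sup>2)"
  shows "weighted_sum W d p (\<lambda>h i j. (b h i j - a h i j)\<^sup>2)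
       \<le> 4 * weighted_sum W d p (\<lambda>h i j. (y h i j - a h i j)\<^sup>2)"
proof -
  have sq_bound: "(u + v)\<^sup>2 \<le> 2 * u\<^sup>2 + 2 * v\<^sup>2" for u v :: real
    using sum_squares_bound[of u v] by (simp add: power2_sum)
  have "(b h i j - a h i j)\<^sup>2 \<le> 2 * (b h i j - y h i j)\<^sup>2 + 2 * (y h i j - a h i j)\<^sup>2"
    for h i j
    using sq_bound[of "b h i j - y h i j" "y h i j - a h i j"] by simp
  then have "weighted_sum W d p (\<lambda>h i j. (b h i j - a h i j)\<^sup>2)
      \<le> weighted_sum W d p (\<lambda>h i j. 2 * (b h i j - y h i j)\<^sup>2 + 2 * (y h i j - a h i j)\<^sup>2)"
    by (intro weighted_sum_mono assms(1)) simp
  also have "\<dots> \<le> 4 * weighted_sum W d p (\<lambda>h i j. (y h i j - a h i j)\<^sup>2)"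
    using closer unfolding weighted_sum_add weighted_sum_cmult by (simp add: power2_commute)
  finally show ?thesis .
qed

section \<open>The oracle classifier\<close>

lemma eigenvalue_sum_le_separation:
  assumes stationary: "\<And>g'. g' \<le> 1 \<Longrightarrow> weakly_stationary (Mg g') (X g')"
    and sd: "\<And>h. h \<le> p \<Longrightarrow> spectral_decomp (R_op Mg X h) (\<nu> h) (lam h)"
    and W: "\<And>h. h \<le> p \<Longrightarrow> 0 \<le> W h" and "g \<le> 1"
  shows "(\<Sum>h = 0..p. W h * (\<Sum>j = 1..d h. lam h j))
       \<le> weighted_sum W d p
            (\<lambda>h i j. (kappa_coef Mg X \<nu> (1 - g) h i j - kappa_coef Mg X \<nu> g h i j)\<^sup>2)"
proof -
  have "(\<Sum>h = 0..p. W h * (\<Sum>j = 1..d h. lam h j))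
      \<le> weighted_sum W d p (\<lambda>h i j. (kappa_coef Mg X \<nu> 0 h i j - kappa_coef Mg X \<nu> 1 h i j)\<^sup>2)"
    by (intro diagonal_sum_le_weighted_sum W zero_le_power2 R_op_eigenvalue_le[OF stationary sd])
  also have "\<dots> = weighted_sum W d p
      (\<lambda>h i j. (kappa_coef Mg X \<nu> (1 - g) h i j - kappa_coef Mg X \<nu> g h i j)\<^sup>2)"
    using \<open>g \<le> 1\<close> by (cases g) (auto simp: power2_commute)
  finally show ?thesis .
qed

lemma Dstat_eq_weighted_sum:
  "Dstat Mg X W d \<nu> p y g' =
    weighted_sum W d p (\<lambda>h i j. (kappa_coef Mg X \<nu> g' h i j - yfeat p \<nu> y h i j)\<^sup>2)"
  unfolding Dstat_def weighted_sum_def kappa_coef_def ..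

lemma oracle_class_wrong_imp_eigenvalue_sum_le:
  assumes stationary: "\<And>g'. g' \<le> 1 \<Longrightarrow> weakly_stationary (Mg g') (X g')"
    and sd: "\<And>h. h \<le> p \<Longrightarrow> spectral_decomp (R_op Mg X h) (\<nu> h) (lam h)"
    and W: "\<And>h. h \<le> p \<Longrightarrow> 0 \<le> W h" and "g \<le> 1"
    and "oracle_class Mg X W d \<nu> p y \<noteq> g"
  shows "(\<Sum>h = 0..p. W h * (\<Sum>j = 1..d h. lam h j))
       \<le> 4 * weighted_sum W d p (\<lambda>h i j. (yfeat p \<nu> y h i j - kappa_coef Mg X \<nu> g h i j)\<^sup>2)"
proof -
  have "Dstat Mg X W d \<nu> p y (1 - g) \<le> Dstat Mg X W d \<nu> p y g"
    using assms(4,5) unfolding oracle_class_def by (cases g) (auto split: if_splits)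
  from weighted_sum_separation_le[OF W this[unfolded Dstat_eq_weighted_sum]]
  have "weighted_sum W d p
          (\<lambda>h i j. (kappa_coef Mg X \<nu> (1 - g) h i j - kappa_coef Mg X \<nu> g h i j)\<^sup>2)
      \<le> 4 * weighted_sum W d p (\<lambda>h i j. (yfeat p \<nu> y h i j - kappa_coef Mg X \<nu> g h i j)\<^sup>2)" .
  moreover have "(\<Sum>h = 0..p. W h * (\<Sum>j = 1..d h. lam h j))
      \<le> weighted_sum W d p
          (\<lambda>h i j. (kappa_coef Mg X \<nu> (1 - g) h i j - kappa_coef Mg X \<nu> g h i j)\<^sup>2)"
    using stationary sd W \<open>g \<le> 1\<close> by (rule eigenvalue_sum_le_separation)
  ultimately show ?thesis by linarith
qed

theorem theorem1:
  fixes Mg :: "nat \<Rightarrow> 'w measure"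
    and X :: "nat \<Rightarrow> nat \<Rightarrow> 'w \<Rightarrow> 'a::{real_inner,banach,second_countable_topology}"
    and M :: "'v measure" and Z :: "nat \<Rightarrow> 'v \<Rightarrow> 'a" and m :: nat
    and g p :: nat
    and \<nu> :: "nat \<Rightarrow> nat \<Rightarrow> 'a" and lam :: "nat \<Rightarrow> nat \<Rightarrow> real"
    and d :: "nat \<Rightarrow> nat" and W :: "nat \<Rightarrow> real"
  assumes "g \<le> 1"
    and "\<And>g'. g' \<le> 1 \<Longrightarrow> prob_space (Mg g')"
    and "\<And>g'. g' \<le> 1 \<Longrightarrow> weakly_stationary (Mg g') (X g')"
    and "\<And>g'. g' \<le> 1 \<Longrightarrow> zero_mean (Mg g') (X g')"
    and "\<And>g' k. g' \<le> 1 \<Longrightarrow> k \<ge> 1 \<Longrightarrow> integrable (Mg g') (\<lambda>\<omega>. norm (X g' k \<omega>) ^ 4)"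
    and "\<And>h. h \<le> p \<Longrightarrow> spectral_decomp (R_op Mg X h) (\<nu> h) (lam h)"
    and "\<exists>h\<le>p. hs_norm (R_op Mg X h) > 0"
    and "\<And>h. h \<le> p \<Longrightarrow> W h > 0"
    and "\<And>h. h \<le> p \<Longrightarrow> d h \<ge> 1"
    and "prob_space M"
    and "\<And>k. Z k \<in> borel_measurable M"
    and "distr M (PiM UNIV (\<lambda>_. borel)) (\<lambda>\<omega> k. Z k \<omega>)
         = distr (Mg g) (PiM UNIV (\<lambda>_. borel)) (\<lambda>\<omega> k. X g k \<omega>)"
  shows "measure M {\<omega> \<in> space M. oracle_class Mg X W d \<nu> p (\<lambda>k. Z (m + k) \<omega>) \<noteq> g}
         \<le> min (4 * (\<Sum>h = 0..p. W h * (\<Sum>i = 1..d h. \<Sum>j = 1..d h. sigma M Z m Mg X g p \<nu> h i j))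
                  / (\<Sum>h = 0..p. W h * (\<Sum>j = 1..d h. lam h j))) 1"
proof -
  note g = assms(1) and stationary = assms(3) and X4 = assms(5) and sd = assms(6)
    and W = assms(8) and Z = assms(11) and law = assms(12)
  interpret prob_space M by (rule assms(10))
  have W_nonneg: "h \<le> p \<Longrightarrow> 0 \<le> W h" for h using W by (simp add: less_imp_le)
  define e where "e \<omega> h i j = yfeat p \<nu> (\<lambda>k. Z (m + k) \<omega>) h i j - kappa_coef Mg X \<nu> g h i j"
    for \<omega> h i j
  define \<Lambda> where "\<Lambda> = (\<Sum>h = 0..p. W h * (\<Sum>j = 1..d h. lam h j))"
  have \<Lambda>_pos: "0 < \<Lambda>"
    unfolding \<Lambda>_def using sd assms(7) W assms(9) by (rule eigenvalue_sum_pos)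
  have Z4: "integrable M (\<lambda>\<omega>. norm (Z k \<omega>) ^ 4)" if "1 \<le> k" for k
  proof -
    have Xk: "X g k \<in> borel_measurable (Mg g)"
      using stationary[OF g] that unfolding weakly_stationary_def by simp
    have norm4: "(\<lambda>x::'a. norm x ^ 4) \<in> borel_measurable borel" by measurable
    show ?thesis
      using integrable_component_distr_eq[OF assms(10) Z law Xk norm4] X4[OF g that] by simp
  qed
  have e_sq: "integrable M (\<lambda>\<omega>. (e \<omega> h i j)\<^sup>2)" for h i j
  proof -
    have "square_integrable M (\<lambda>\<omega>. yfeat p \<nu> (\<lambda>k. Z (m + k) \<omega>) h i j)"
      using finite_measure_axioms Z Z4 by (rule square_integrable_yfeat)
    then have "square_integrable M (\<lambda>\<omega>. e \<omega> h i j)"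
      unfolding e_def by (intro square_integrable_diff square_integrable_const finite_measure_axioms)
    then show ?thesis unfolding square_integrable_def by simp
  qed
  have error_subset: "{\<omega> \<in> space M. oracle_class Mg X W d \<nu> p (\<lambda>k. Z (m + k) \<omega>) \<noteq> g}
      \<subseteq> {\<omega> \<in> space M. \<Lambda> / 4 \<le> weighted_sum W d p (\<lambda>h i j. (e \<omega> h i j)\<^sup>2)}"
  proof safe
    fix \<omega> assume "oracle_class Mg X W d \<nu> p (\<lambda>k. Z (m + k) \<omega>) \<noteq> g"
    with stationary sd W_nonneg g have "\<Lambda> \<le> 4 * weighted_sum W d p (\<lambda>h i j. (e \<omega> h i j)\<^sup>2)"
      unfolding \<Lambda>_def e_def by (rule oracle_class_wrong_imp_eigenvalue_sum_le)
    then show "\<Lambda> / 4 \<le> weighted_sum W d p (\<lambda>h i j. (e \<omega> h i j)\<^sup>2)" by simp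
  qed
  have "measure M {\<omega> \<in> space M. oracle_class Mg X W d \<nu> p (\<lambda>k. Z (m + k) \<omega>) \<noteq> g}
      \<le> (LINT \<omega>|M. weighted_sum W d p (\<lambda>h i j. (e \<omega> h i j)\<^sup>2)) / (\<Lambda> / 4)"
    using \<Lambda>_pos W_nonneg
    by (intro integral_Markov_inequality_subset[OF integrable_weighted_sum[OF e_sq] _ _ error_subset]
        AE_I2 weighted_sum_nonneg) simp_all
  also have "(LINT \<omega>|M. weighted_sum W d p (\<lambda>h i j. (e \<omega> h i j)\<^sup>2))
      = weighted_sum W d p (\<lambda>h i j. LINT \<omega>|M. (e \<omega> h i j)\<^sup>2)"
    by (rule integral_weighted_sum) (rule e_sq)
  also have "\<dots> = weighted_sum W d p (sigma M Z m Mg X g p \<nu>)"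
    unfolding sigma_def e_def kappa_coef_def ..
  finally show ?thesis
    using prob_le_1 unfolding \<Lambda>_def weighted_sum_def by (simp add: mult.commute)
qed

end
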